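(* Let $\mathcal{X}$ be a finite alphabet with orthonormal basis $\{|x\rangle\}_{x\in\mathcal{X}}$ of the classical system $X$, and let $E$ be a quantum system. Let $\rho=\sum_{x\in\mathcal{X}}P(x)|x\rangle\langle x|\otimes\omega(x)$ and $\rho_*=\sum_{x\in\mathcal{X}}P_*(x)|x\rangle\langle x|\otimes\omega_*(x)$ be classical-quantum states, where $P,P_*$ are probability distributions on $\mathcal{X}$ and $\omega(x),\omega_*(x)$ are density operators on $E$. Let $S\subseteq\mathcal{X}$, $\Pi=\sum_{x\in S}|x\rangle\langle x|$ (acting on $X$, tensored with the identity on $E$), $p=\mathrm{tr}\,\Pi\rho\Pi$, $p_*=\mathrm{tr}\,\Pi\rho_*\Pi$, and define the projected states $\tau=p^{-1}\Pi\rho\Pi$ and $\tau_*=p_*^{-1}\Pi\rho_*\Pi$ (with $p,p_*>0$). Let $\epsilon>0$. If $D(\rho,\rho_* )\le p\,\frac{\epsilon^2}{4}$, then $|p-p_*|\le p\,\frac{\epsilon^2}{2}$ and $D(\tau,\tau_* )\le\frac{\epsilon^2}{2}$.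
   Context: For operators $A,B$, the trace distance is $D(A,B)=\frac{1}{2}\mathrm{tr}|A-B|$, where $|O|=\sqrt{O^\dagger O}$. The positivity $p,p_*>0$ is needed for $\tau,\tau_*$ to be defined. *)

theory Defs
  imports "HOL-Analysis.Analysis"
begin

definition cadj :: "complex^'n^'m \<Rightarrow> complex^'m^'n" where
  "cadj A = (\<chi> i j. cnj (A $ j $ i))"

definition psd :: "complex^'n^'n \<Rightarrow> bool" where
  "psd A \<longleftrightarrow> cadj A = A \<and>
     (\<forall>v::complex^'n. let q = (\<Sum>i\<in>UNIV. cnj (v $ i) * (A *v v) $ i) in Im q = 0 \<and> Re q \<ge> 0)"

definition density :: "complex^'n^'n \<Rightarrow> bool" where
  "density A \<longleftrightarrow> psd A \<and> trace A = 1"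

definition mabs :: "complex^'n^'n \<Rightarrow> complex^'n^'n" where
  "mabs M = (THE R. psd R \<and> R ** R = cadj M ** M)"

definition tdist :: "complex^'n^'n \<Rightarrow> complex^'n^'n \<Rightarrow> real" where
  "tdist A B = Re (trace (mabs (A - B))) / 2"

text \<open>Classical-quantum state sum_x P(x) |x><x| (tensor) omega(x) on X (tensor) E,
  with basis of X (tensor) E indexed by pairs (x,e).\<close>
definition cq_state :: "('x::finite \<Rightarrow> real) \<Rightarrow> ('x \<Rightarrow> complex^'e::finite^'e)
     \<Rightarrow> complex^('x \<times> 'e)^('x \<times> 'e)" where
  "cq_state P \<omega> = (\<chi> i j. if fst i = fst j then complex_of_real (P (fst i)) * \<omega> (fst i) $ snd i $ snd j else 0)"

definition proj_cl :: "'x::finite set \<Rightarrow> complex^('x \<times> 'e::finite)^('x \<times> 'e)" where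
  "proj_cl S = (\<chi> i j. if i = j \<and> fst i \<in> S then 1 else 0)"

end

theory Submission
  imports Defs
begin

text \<open>Write \<open>\<Delta> = \<rho> - \<rho>\<^sub>*\<close> and let \<open>Q\<close> be the projector. The trace norm of a Hermitian
  \<open>H\<close> is the largest value of \<open>|tr (C H)|\<close> over matrices \<open>C\<close> of numerical radius at most
  one, attained by \<open>C = sgn H\<close>. Compressing \<open>C\<close> by \<open>Q\<close> stays in this class, so
  \<open>\<parallel>Q \<Delta> Q\<parallel>\<^sub>1 \<le> \<parallel>\<Delta>\<parallel>\<^sub>1 = 2 D(\<rho>, \<rho>\<^sub>*)\<close>, and \<open>|p - p\<^sub>*| = |tr (Q \<Delta> Q)|\<close> obeys the same
  bound. Pairing \<open>\<tau> - \<tau>\<^sub>*\<close> with its sign splits it into \<open>tr (C Q \<Delta> Q)/p\<close> and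
  \<open>(1/p - 1/p\<^sub>*) tr (C Q \<rho>\<^sub>* Q)\<close>; since \<open>Q \<rho>\<^sub>* Q\<close> is positive with trace \<open>p\<^sub>*\<close>, the second term
  is at most \<open>|p - p\<^sub>*|/p\<close>. The eigenbases used throughout come from the spectral theorem,
  obtained by maximising the Rayleigh quotient on orthogonal complements.\<close>

definition cinner :: "complex^'n \<Rightarrow> complex^'n \<Rightarrow> complex" where
  "cinner v w = (\<Sum>i\<in>UNIV. cnj (v$i) * w$i)"

abbreviation hermitian :: "complex^'n^'n \<Rightarrow> bool" where
  "hermitian A \<equiv> cadj A = A"

lemma cnj_cinner: "cnj (cinner v w) = cinner w v"
  by (simp add: cinner_def mult.commute)

lemma power2_norm_vec: "(norm (v::complex^'n))^2 = (\<Sum>i\<in>UNIV. (cmod (v$i))^2)"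
  by (simp add: norm_vec_def L2_set_def sum_nonneg)

lemma cinner_self: "cinner v v = of_real ((norm v)^2)"
  unfolding power2_norm_vec cinner_def of_real_sum
  by (intro sum.cong refl) (metis complex_norm_square mult.commute)

lemma cinner_self_eq_0 [simp]: "cinner v v = 0 \<longleftrightarrow> v = 0"
  by (simp add: cinner_self)

lemma inner_eq_Re_cinner: "inner v w = Re (cinner v w)"
  by (simp add: inner_vec_def cinner_def inner_complex_def Re_sum)

lemma cinner_add_right: "cinner u (v + w) = cinner u v + cinner u w"
  by (simp add: cinner_def algebra_simps sum.distrib)

lemma cinner_diff_right: "cinner u (v - w) = cinner u v - cinner u w"
  by (simp add: cinner_def algebra_simps sum_subtractf)

lemma cinner_add_left: "cinner (u + w) v = cinner u v + cinner w v"
  by (simp add: cinner_def algebra_simps sum.distrib)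

lemma cinner_scale_right: "cinner u (c *s v) = c * cinner u v"
  by (simp add: cinner_def sum_distrib_left mult_ac)

lemma cinner_scale_left: "cinner (c *s u) v = cnj c * cinner u v"
  by (simp add: cinner_def sum_distrib_left mult_ac)

lemma cinner_zero_left [simp]: "cinner 0 v = 0"
  by (simp add: cinner_def)

lemma cinner_zero_right [simp]: "cinner v 0 = 0"
  by (simp add: cinner_def)

lemma cinner_sum_right: "cinner u (\<Sum>b\<in>B. f b) = (\<Sum>b\<in>B. cinner u (f b))"
  by (simp add: cinner_def sum_distrib_left) (rule sum.swap)

lemma cinner_axis: "cinner (axis i 1) v = v$i"
proof -
  have "cinner (axis i 1) v = (\<Sum>j\<in>UNIV. if j = i then v$i else 0)"
    unfolding cinner_def axis_def by (intro sum.cong) auto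
  then show ?thesis by simp
qed

lemma cinner_cadj: "cinner u (A *v v) = cinner (cadj A *v u) v"
proof -
  have "cinner u (A *v v) = (\<Sum>i\<in>UNIV. \<Sum>j\<in>UNIV. cnj (u$i) * A$i$j * v$j)"
    by (simp add: cinner_def matrix_vector_mult_def sum_distrib_left mult_ac)
  also have "\<dots> = (\<Sum>j\<in>UNIV. \<Sum>i\<in>UNIV. cnj (u$i) * A$i$j * v$j)"
    by (rule sum.swap)
  also have "\<dots> = cinner (cadj A *v u) v"
    by (simp add: cinner_def matrix_vector_mult_def cadj_def sum_distrib_right sum_distrib_left mult_ac)
  finally show ?thesis .
qed

lemma cinner_hermitian: "hermitian A \<Longrightarrow> cinner u (A *v v) = cinner (A *v u) v"
  by (simp add: cinner_cadj)

lemma norm_vector_smult: "norm (c *s (x::complex^'n)) = cmod c * norm x"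
proof -
  have "(norm (c *s x))^2 = (cmod c * norm x)^2"
    unfolding power2_norm_vec power_mult_distrib
    by (simp add: vector_scalar_mult_def norm_mult power_mult_distrib sum_distrib_left)
  then show ?thesis by (simp add: power2_eq_iff_nonneg)
qed

lemma cadj_diff: "cadj (A - B) = cadj A - cadj B"
  by (simp add: cadj_def vec_eq_iff)

lemma cadj_mult: "cadj (A ** B) = cadj B ** cadj A"
  by (simp add: cadj_def vec_eq_iff matrix_matrix_mult_def cnj_sum mult.commute)

lemma cadj_scaleR: "cadj (c *\<^sub>R A) = c *\<^sub>R cadj A"
  by (simp add: cadj_def vec_eq_iff)

lemma cadj_id: "cadj (mat 1 :: complex^'n^'n) = mat 1"
  by (simp add: cadj_def mat_def vec_eq_iff)

lemma matrix_diff_ldistrib: "(A :: complex^'n^'n) ** (B - C) = A ** B - A ** C"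
  by (simp add: matrix_matrix_mult_def vec_eq_iff sum_subtractf right_diff_distrib)

lemma matrix_diff_rdistrib: "((A - B) :: complex^'n^'n) ** C = A ** C - B ** C"
  by (simp add: matrix_matrix_mult_def vec_eq_iff sum_subtractf left_diff_distrib)

lemma matrix_mult_scaleR_right: "(C :: complex^'n^'n) ** (k *\<^sub>R A) = k *\<^sub>R (C ** A)"
  by (simp add: matrix_scalar_ac scalar_matrix_assoc)

lemma trace_scaleR: "trace (c *\<^sub>R (A :: complex^'n^'n)) = c *\<^sub>R trace A"
  by (simp add: trace_def scaleR_sum_right)

lemma matrix_vector_mult_axis_nth: "(M *v axis i 1) $ j = M $ j $ i"
  by (simp add: matrix_vector_mult_def axis_def if_distrib cong: if_cong)

lemma trace_eq_sum_cinner_axis: "trace M = (\<Sum>i\<in>UNIV. cinner (axis i 1) (M *v axis i 1))"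
  by (simp add: trace_def cinner_axis matrix_vector_mult_axis_nth)

definition orthonormal :: "(complex^'n) set \<Rightarrow> bool" where
  "orthonormal B \<longleftrightarrow> finite B \<and> (\<forall>b\<in>B. \<forall>c\<in>B. cinner b c = (if b = c then 1 else 0))"

definition orthonormal_basis :: "(complex^'n) set \<Rightarrow> bool" where
  "orthonormal_basis B \<longleftrightarrow> orthonormal B \<and> (\<forall>v. v = (\<Sum>b\<in>B. cinner b v *s b))"

definition diag_in :: "(complex^'n) set \<Rightarrow> (complex^'n \<Rightarrow> complex) \<Rightarrow> complex^'n^'n" where
  "diag_in B f = (\<chi> i j. \<Sum>b\<in>B. f b * b$i * cnj (b$j))"

lemma orthonormal_coeff:
  assumes "orthonormal B" "c \<in> B"
  shows "cinner c (\<Sum>b\<in>B. g b *s b) = g c"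
proof -
  have "cinner c (\<Sum>b\<in>B. g b *s b) = (\<Sum>b\<in>B. if b = c then g c else 0)"
    unfolding cinner_sum_right cinner_scale_right using assms unfolding orthonormal_def
    by (intro sum.cong) auto
  then show ?thesis using assms unfolding orthonormal_def by simp
qed

lemma orthonormal_card_le:
  assumes "orthonormal (B :: (complex^'n) set)"
  shows "card B \<le> DIM(complex^'n)"
proof -
  have "pairwise orthogonal B"
    using assms unfolding orthonormal_def pairwise_def orthogonal_def inner_eq_Re_cinner by auto
  moreover have "0 \<notin> B"
    using assms unfolding orthonormal_def by fastforce
  ultimately have "independent B"
    by (rule pairwise_orthogonal_independent)
  then show ?thesis
    using independent_bound by blast
qed

lemma orthonormal_basis_expansion:
  "orthonormal_basis B \<Longrightarrow> v = (\<Sum>b\<in>B. cinner b v *s b)"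
  by (simp add: orthonormal_basis_def)

lemma orthonormal_basisD:
  assumes "orthonormal_basis B"
  shows "finite B" and "\<And>b c. b \<in> B \<Longrightarrow> c \<in> B \<Longrightarrow> cinner b c = (if b = c then 1 else 0)"
  using assms unfolding orthonormal_basis_def orthonormal_def by auto

lemma orthonormal_basis_norm:
  assumes "orthonormal_basis B" "b \<in> B"
  shows "norm b = 1"
proof -
  have "complex_of_real ((norm b)^2) = 1"
    using orthonormal_basisD(2)[OF assms(1) assms(2) assms(2)] by (simp add: cinner_self)
  then have "(norm b)^2 = 1"
    using of_real_eq_1_iff by blast
  then show ?thesis
    using norm_ge_zero[of b] by (auto simp: power2_eq_1_iff)
qed

lemma parseval:
  assumes "orthonormal_basis B"
  shows "(norm v)^2 = (\<Sum>b\<in>B. (cmod (cinner b v))^2)"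
proof -
  have "cinner v v = cinner v (\<Sum>b\<in>B. cinner b v *s b)"
    using orthonormal_basis_expansion[OF assms, of v] by simp
  also have "\<dots> = of_real (\<Sum>b\<in>B. (cmod (cinner b v))^2)"
    unfolding cinner_sum_right cinner_scale_right of_real_sum complex_norm_square
    by (simp add: cnj_cinner[of b v for b, symmetric] mult.commute)
  finally show ?thesis
    unfolding cinner_self of_real_eq_iff .
qed

lemma trace_orthonormal_basis:
  assumes "orthonormal_basis B"
  shows "trace M = (\<Sum>b\<in>B. cinner b (M *v b))"
proof -
  have delta: "(\<Sum>b\<in>B. cnj (b$j) * b$i) = (if i = j then 1 else 0)" for i j
  proof -
    have "axis j 1 $ i = (\<Sum>b\<in>B. cinner b (axis j 1) *s b) $ i"
      using orthonormal_basis_expansion[OF assms] by metis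
    moreover have "cinner b (axis j 1) = cnj (b$j)" for b
      using cnj_cinner[of "axis j 1" b] by (simp add: cinner_axis)
    ultimately show ?thesis
      by (simp add: axis_def)
  qed
  have "(\<Sum>b\<in>B. cinner b (M *v b)) = (\<Sum>b\<in>B. \<Sum>i\<in>UNIV. \<Sum>j\<in>UNIV. M$i$j * (cnj (b$i) * b$j))"
    by (simp add: cinner_def matrix_vector_mult_def sum_distrib_left mult_ac)
  also have "\<dots> = (\<Sum>i\<in>UNIV. \<Sum>j\<in>UNIV. \<Sum>b\<in>B. M$i$j * (cnj (b$i) * b$j))"
    by (subst sum.swap) (intro sum.cong refl sum.swap)
  also have "\<dots> = (\<Sum>i\<in>UNIV. \<Sum>j\<in>UNIV. M$i$j * (if j = i then 1 else 0))"
    by (simp add: sum_distrib_left[symmetric] delta)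
  also have "\<dots> = trace M"
    by (simp add: trace_def if_distrib cong: if_cong)
  finally show ?thesis
    by simp
qed

lemma diag_in_apply: "diag_in B f *v v = (\<Sum>b\<in>B. (f b * cinner b v) *s b)"
proof -
  have "(diag_in B f *v v)$i = (\<Sum>b\<in>B. (f b * cinner b v) * b$i)" for i
  proof -
    have "(diag_in B f *v v)$i = (\<Sum>j\<in>UNIV. \<Sum>b\<in>B. f b * b$i * cnj (b$j) * v$j)"
      by (simp add: diag_in_def matrix_vector_mult_def sum_distrib_right)
    also have "\<dots> = (\<Sum>b\<in>B. \<Sum>j\<in>UNIV. f b * b$i * cnj (b$j) * v$j)"
      by (rule sum.swap)
    also have "\<dots> = (\<Sum>b\<in>B. (f b * cinner b v) * b$i)"
      by (simp add: cinner_def sum_distrib_left sum_distrib_right mult_ac)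
    finally show ?thesis .
  qed
  then show ?thesis
    by (simp add: vec_eq_iff)
qed

lemma diag_in_apply_basis:
  assumes "orthonormal_basis B" "c \<in> B"
  shows "diag_in B f *v c = f c *s c"
proof -
  have "diag_in B f *v c = (\<Sum>b\<in>B. if b = c then f c *s c else 0)"
    unfolding diag_in_apply using orthonormal_basisD(2)[OF assms(1) _ assms(2)]
    by (intro sum.cong) auto
  then show ?thesis
    using orthonormal_basisD(1)[OF assms(1)] assms(2) by simp
qed

lemma cinner_diag_in:
  "cinner v (diag_in B f *v v) = (\<Sum>b\<in>B. f b * of_real ((cmod (cinner b v))^2))"
  unfolding diag_in_apply cinner_sum_right cinner_scale_right complex_norm_square
  by (intro sum.cong refl) (simp add: cnj_cinner[of b v for b, symmetric])

lemma diag_in_mult: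
  assumes "orthonormal_basis B"
  shows "diag_in B f ** diag_in B g = diag_in B (\<lambda>b. f b * g b)"
proof -
  have "(diag_in B f ** diag_in B g) *v x = diag_in B (\<lambda>b. f b * g b) *v x" for x
  proof -
    have "(diag_in B f ** diag_in B g) *v x = (\<Sum>b\<in>B. (g b * cinner b x) *s (diag_in B f *v b))"
      by (simp add: diag_in_apply[of B g] matrix_vector_mul_assoc[symmetric] vec.sum
          vector_scalar_commute)
    also have "\<dots> = diag_in B (\<lambda>b. f b * g b) *v x"
      using diag_in_apply_basis[OF assms]
      by (simp add: diag_in_apply vector_smult_assoc mult_ac)
    finally show ?thesis .
  qed
  then show ?thesis
    by (simp add: matrix_eq)
qed

lemma cadj_diag_in: "cadj (diag_in B f) = diag_in B (\<lambda>b. cnj (f b))"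
  by (simp add: cadj_def diag_in_def vec_eq_iff cnj_sum mult_ac)

lemma trace_diag_in:
  assumes "orthonormal_basis B"
  shows "trace (diag_in B f) = (\<Sum>b\<in>B. f b)"
  unfolding trace_orthonormal_basis[OF assms] using orthonormal_basisD(2)[OF assms]
  by (intro sum.cong) (auto simp: diag_in_apply_basis[OF assms] cinner_scale_right)

section \<open>Positive semidefinite matrices and the absolute value\<close>

lemma psd_iff:
  "psd A \<longleftrightarrow> hermitian A \<and> (\<forall>v. Im (cinner v (A *v v)) = 0 \<and> Re (cinner v (A *v v)) \<ge> 0)"
  by (simp add: psd_def cinner_def Let_def)

lemma psd_hermitian: "psd A \<Longrightarrow> hermitian A"
  by (simp add: psd_iff)

lemma psd_Re_cinner_nonneg: "psd A \<Longrightarrow> Re (cinner v (A *v v)) \<ge> 0"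
  by (simp add: psd_iff)

lemma linear_coeff_eq_0_if_quadratic_nonneg:
  fixes a c :: real
  assumes "\<forall>t. 2*t*a + t^2*c \<ge> 0"
  shows "a = 0"
proof (rule ccontr)
  assume "a \<noteq> 0"
  then have a2: "a^2 > 0"
    by simp
  show False
  proof (cases "c \<le> 0")
    case True
    have "2*(-a)*a + (-a)^2*c \<ge> 0"
      using assms by blast
    moreover have "(-a)^2*c \<le> 0"
      using True by (simp add: mult_nonneg_nonpos)
    ultimately show False
      using a2 by (simp add: power2_eq_square)
  next
    case False
    have "2*(-a/c)*a + (-a/c)^2*c \<ge> 0"
      using assms by blast
    moreover have "2*(-a/c)*a + (-a/c)^2*c = - (a^2/c)"
      using False by (simp add: field_simps power2_eq_square)
    moreover have "a^2/c > 0"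
      using a2 False by simp
    ultimately show False
      by linarith
  qed
qed

lemma Re_cinner_hermitian_add:
  assumes "hermitian M"
  shows "Re (cinner (w + of_real t *s z) (M *v (w + of_real t *s z)))
     = Re (cinner w (M *v w)) + 2*t*Re (cinner z (M *v w)) + t^2 * Re (cinner z (M *v z))"
proof -
  have "cinner w (M *v z) = cnj (cinner z (M *v w))"
    using cinner_hermitian[OF assms, of w z] by (simp add: cnj_cinner)
  then show ?thesis
    by (simp add: matrix_vector_right_distrib vector_scalar_commute cinner_add_left
        cinner_add_right cinner_scale_left cinner_scale_right power2_eq_square algebra_simps)
qed

text \<open>Expanding the form at \<open>w + t z\<close>, nonnegativity for all real \<open>t\<close> kills the
  linear term \<open>Re \<langle>z, M w\<rangle>\<close>.\<close>

lemma psd_kernel: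
  assumes "psd M" "Re (cinner w (M *v w)) = 0"
  shows "M *v w = 0"
proof -
  have "Re (cinner z (M *v w)) = 0" for z
  proof (rule linear_coeff_eq_0_if_quadratic_nonneg)
    show "\<forall>t. 2*t*Re (cinner z (M *v w)) + t^2 * Re (cinner z (M *v z)) \<ge> 0"
      using psd_Re_cinner_nonneg[OF assms(1), of "w + of_real _ *s z"]
        Re_cinner_hermitian_add[OF psd_hermitian[OF assms(1)], of w _ z] assms(2)
      by auto
  qed
  from this[of "M *v w"] show ?thesis
    by (simp add: cinner_self)
qed

lemma cinner_sandwich:
  "hermitian Q \<Longrightarrow> cinner v ((Q ** M ** Q) *v v) = cinner (Q *v v) (M *v (Q *v v))"
  by (metis cinner_hermitian matrix_vector_mul_assoc)

lemma psd_sandwich: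
  assumes "psd M" "hermitian Q"
  shows "psd (Q ** M ** Q)"
  using assms by (simp add: psd_iff cinner_sandwich cadj_mult matrix_mul_assoc)

lemma Re_trace_psd_nonneg: "psd M \<Longrightarrow> Re (trace M) \<ge> 0"
  unfolding trace_eq_sum_cinner_axis Re_sum by (intro sum_nonneg psd_Re_cinner_nonneg)

lemma psd_trace_eq_0:
  assumes "psd M" "Re (trace M) = 0"
  shows "M = 0"
proof -
  have "Re (cinner (axis i 1) (M *v axis i 1)) = 0" for i
    using assms(2) psd_Re_cinner_nonneg[OF assms(1)]
    unfolding trace_eq_sum_cinner_axis Re_sum by (simp add: sum_nonneg_eq_0_iff)
  then have "M *v axis i 1 = 0" for i
    using psd_kernel[OF assms(1)] by blast
  then show ?thesis
    by (metis matrix_vector_mult_axis_nth vec_eq_iff zero_index)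
qed

lemma psd_sandwich_eq_0:
  assumes "psd M" "hermitian Q" "Q ** M ** Q = 0"
  shows "M *v (Q *v v) = 0"
  using psd_kernel[OF assms(1)] cinner_sandwich[OF assms(2), of v M] assms(3) by simp

text \<open>With \<open>D = R - R'\<close> one has \<open>R D + D R' = R\<^sup>2 - R'\<^sup>2 = 0\<close>, so the traces of the
  positive matrices \<open>D R D\<close> and \<open>D R' D\<close> add up to zero.\<close>

lemma psd_sqrt_unique:
  fixes R R' :: "complex^'n^'n"
  assumes R: "psd R" and R': "psd R'" and eq: "R ** R = R' ** R'"
  shows "R = R'"
proof -
  define D where "D = R - R'"
  have hD: "hermitian D"
    using R R' by (simp add: D_def cadj_diff psd_hermitian)
  have "R ** D + D ** R' = 0"
    using eq by (simp add: D_def matrix_diff_ldistrib matrix_diff_rdistrib matrix_mul_assoc)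
  have "trace (D ** R ** D) + trace (D ** R' ** D) = trace (D ** (R ** D + D ** R'))"
    by (metis matrix_add_ldistrib matrix_mul_assoc trace_add trace_mul_sym)
  also have "\<dots> = 0"
    using \<open>R ** D + D ** R' = 0\<close> by (simp add: matrix_matrix_mult_def trace_def)
  finally have "Re (trace (D ** R ** D)) = 0" "Re (trace (D ** R' ** D)) = 0"
    using Re_trace_psd_nonneg[OF psd_sandwich[OF R hD]] Re_trace_psd_nonneg[OF psd_sandwich[OF R' hD]]
    by (metis add_nonneg_eq_0_iff plus_complex.sel(1) zero_complex.sel(1))+
  then have "R *v (D *v v) = 0" "R' *v (D *v v) = 0" for v
    using psd_sandwich_eq_0 psd_trace_eq_0 psd_sandwich R R' hD by blast+
  then have "D *v (D *v v) = 0" for v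
    by (simp add: D_def matrix_vector_mult_diff_rdistrib)
  then have "D *v v = 0" for v
    using cinner_hermitian[OF hD, of v "D *v v"] by simp
  then show ?thesis
    by (simp add: D_def matrix_eq matrix_vector_mult_diff_rdistrib)
qed

lemma mabs_unique:
  assumes "psd R" "R ** R = cadj M ** M"
  shows "mabs M = R"
  unfolding mabs_def
proof (rule the_equality)
  show "psd R \<and> R ** R = cadj M ** M"
    using assms by simp
  show "R' = R" if "psd R' \<and> R' ** R' = cadj M ** M" for R'
    using psd_sqrt_unique assms that by metis
qed

lemma mabs_psd: "psd M \<Longrightarrow> mabs M = M"
  by (rule mabs_unique) (simp_all add: psd_hermitian)

section \<open>The spectral theorem for Hermitian matrices\<close>

definition orth_compl :: "(complex^'n) set \<Rightarrow> (complex^'n) set" where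
  "orth_compl B = {x. \<forall>b\<in>B. cinner b x = 0}"

text \<open>The eigenvalue of \<open>b\<close> is recorded as \<open>Re \<langle>b, A b\<rangle>\<close>, which is right for unit vectors.\<close>

definition real_eigenvectors :: "complex^'n^'n \<Rightarrow> (complex^'n) set \<Rightarrow> bool" where
  "real_eigenvectors A B \<longleftrightarrow> (\<forall>b\<in>B. A *v b = of_real (Re (cinner b (A *v b))) *s b)"

lemma orth_compl_add: "x \<in> orth_compl B \<Longrightarrow> y \<in> orth_compl B \<Longrightarrow> x + y \<in> orth_compl B"
  by (simp add: orth_compl_def cinner_add_right)

lemma orth_compl_diff: "x \<in> orth_compl B \<Longrightarrow> y \<in> orth_compl B \<Longrightarrow> x - y \<in> orth_compl B"
  by (simp add: orth_compl_def cinner_diff_right)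

lemma orth_compl_smult: "x \<in> orth_compl B \<Longrightarrow> c *s x \<in> orth_compl B"
  by (simp add: orth_compl_def cinner_scale_right)

lemma continuous_on_vec_nth: "continuous_on S (\<lambda>x. x $ i)"
  by (rule continuous_on_component[OF continuous_on_id])

lemma closed_orth_compl: "closed (orth_compl B)"
proof -
  have "orth_compl B = (\<Inter>b\<in>B. {x. cinner b x = 0})"
    by (auto simp: orth_compl_def)
  moreover have "closed {x. cinner b x = 0}" for b
    unfolding cinner_def
    by (intro closed_Collect_eq continuous_on_sum continuous_on_mult continuous_on_const
        continuous_on_vec_nth)
  ultimately show ?thesis
    by (auto intro!: closed_INT)
qed

lemma hermitian_orth_compl_invariant:
  assumes "hermitian A" "real_eigenvectors A B" "x \<in> orth_compl B"
  shows "A *v x \<in> orth_compl B"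
proof -
  have "cinner b (A *v x) = 0" if "b \<in> B" for b
  proof -
    have "cinner b (A *v x) = cinner (of_real (Re (cinner b (A *v b))) *s b) x"
      using assms(1,2) that by (simp add: cinner_hermitian real_eigenvectors_def)
    then show ?thesis
      using assms(3) that by (simp add: cinner_scale_left orth_compl_def)
  qed
  then show ?thesis
    by (simp add: orth_compl_def)
qed

text \<open>First-order condition at a maximiser of the Rayleigh quotient: perturbing \<open>v\<close> by
  \<open>t z\<close> with \<open>z \<bottom> v\<close> changes \<open>\<parallel>v\<parallel>\<^sup>2\<close> only to second order in \<open>t\<close>.\<close>

lemma rayleigh_maximizer_orthogonal:
  assumes h: "hermitian A" and v: "v \<in> orth_compl B" "norm v = 1"
    and max: "\<forall>x\<in>orth_compl B. Re (cinner x (A *v x)) \<le> Re (cinner v (A *v v)) * (norm x)^2"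
    and z: "z \<in> orth_compl B" "cinner v z = 0"
  shows "cinner z (A *v v) = 0"
proof -
  have Re0: "Re (cinner y (A *v v)) = 0" if "y \<in> orth_compl B" "cinner v y = 0" for y
  proof -
    have "cinner y v = 0"
      using that(2) cnj_cinner[of v y] by simp
    then have norm_eq: "(norm (v + of_real t *s y))^2 = 1 + t^2 * (norm y)^2" for t
      using Re_cinner_hermitian_add[OF cadj_id, of v t y] v(2) by (simp add: cinner_self)
    have in_compl: "v + of_real t *s y \<in> orth_compl B" for t
      using v(1) that(1) by (intro orth_compl_add orth_compl_smult)
    have "Re (cinner (v + of_real t *s y) (A *v (v + of_real t *s y)))
        \<le> Re (cinner v (A *v v)) * (1 + t^2 * (norm y)^2)" for t
      using bspec[OF max in_compl[of t]] by (simp only: norm_eq)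
    then have "2*t*(- Re (cinner y (A *v v)))
        + t^2 * (Re (cinner v (A *v v)) * (norm y)^2 - Re (cinner y (A *v y))) \<ge> 0" for t
      unfolding Re_cinner_hermitian_add[OF h] by (simp add: algebra_simps)
    then have "- Re (cinner y (A *v v)) = 0"
      by (intro linear_coeff_eq_0_if_quadratic_nonneg) blast
    then show ?thesis
      by simp
  qed
  have "Re (cinner (\<i> *s z) (A *v v)) = 0"
    using Re0 z by (simp add: orth_compl_smult cinner_scale_right)
  then show ?thesis
    using Re0[OF z] by (simp add: cinner_scale_left complex_eq_iff)
qed

lemma rayleigh_maximizer_eigenvector:
  assumes h: "hermitian A" and inv: "\<forall>x\<in>orth_compl B. A *v x \<in> orth_compl B"
    and v: "v \<in> orth_compl B" "norm v = 1"
    and max: "\<forall>x\<in>orth_compl B. Re (cinner x (A *v x)) \<le> Re (cinner v (A *v v)) * (norm x)^2"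
  shows "A *v v = of_real (Re (cinner v (A *v v))) *s v"
proof -
  define \<mu> where "\<mu> = cinner v (A *v v)"
  define u where "u = A *v v - \<mu> *s v"
  have vv: "cinner v v = 1"
    using v(2) by (simp add: cinner_self)
  have "u \<in> orth_compl B"
    unfolding u_def using inv v(1) by (intro orth_compl_diff orth_compl_smult) auto
  moreover have uv: "cinner v u = 0"
    by (simp add: u_def \<mu>_def cinner_diff_right cinner_scale_right vv)
  ultimately have "cinner u (A *v v) = 0"
    using rayleigh_maximizer_orthogonal[OF h v max] by blast
  moreover have "cinner u v = 0"
    using uv cnj_cinner[of v u] by simp
  ultimately have "cinner u u = 0"
    by (simp add: u_def cinner_diff_right cinner_scale_right)
  then have "A *v v = \<mu> *s v"
    by (simp add: u_def)
  moreover have "cnj \<mu> = \<mu>"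
    unfolding \<mu>_def using cinner_hermitian[OF h, of v v] cnj_cinner[of v "A *v v"] by simp
  then have "of_real (Re \<mu>) = \<mu>"
    by (simp add: Reals_cnj_iff[symmetric] of_real_Re)
  ultimately show ?thesis
    by (simp add: \<mu>_def)
qed

lemma hermitian_eigenvector_in_orth_compl:
  fixes A :: "complex^'n^'n"
  assumes h: "hermitian A" and eig: "real_eigenvectors A B"
    and w: "w \<in> orth_compl B" "w \<noteq> 0"
  obtains v where "norm v = 1" "v \<in> orth_compl B" "A *v v = of_real (Re (cinner v (A *v v))) *s v"
proof -
  define K where "K = sphere 0 1 \<inter> orth_compl B"
  define g where "g x = Re (cinner x (A *v x))" for x
  have "compact K"
    unfolding K_def by (intro compact_Int_closed closed_orth_compl) auto
  moreover have "(1 / norm w) *s w \<in> K"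
    using w unfolding K_def by (simp add: orth_compl_smult norm_vector_smult norm_divide)
  moreover have "continuous_on K g"
    unfolding g_def cinner_def matrix_vector_mult_def vec_lambda_beta
    by (intro continuous_on_Re continuous_on_sum continuous_on_mult continuous_on_const
        continuous_on_vec_nth continuous_on_cnj)
  ultimately obtain v where v: "v \<in> K" and vmax: "\<And>y. y \<in> K \<Longrightarrow> g y \<le> g v"
    using continuous_attains_sup[of K g] by blast
  have "g x \<le> g v * (norm x)^2" if x: "x \<in> orth_compl B" for x
  proof (cases "x = 0")
    case False
    have "(1 / norm x) *s x \<in> K"
      using x False unfolding K_def by (simp add: orth_compl_smult norm_vector_smult norm_divide)
    moreover have "g ((1 / norm x) *s x) = g x / (norm x)^2"
      by (simp add: g_def vector_scalar_commute cinner_scale_left cinner_scale_right power2_eq_square)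
    ultimately have "g x / (norm x)^2 \<le> g v"
      using vmax by metis
    then show ?thesis
      using False by (simp add: divide_le_eq)
  qed (simp add: g_def)
  then have "A *v v = of_real (Re (cinner v (A *v v))) *s v"
    using v hermitian_orth_compl_invariant[OF h eig]
    by (intro rayleigh_maximizer_eigenvector[OF h]) (auto simp: K_def g_def)
  then show ?thesis
    using v by (intro that) (auto simp: K_def)
qed

text \<open>A largest orthonormal family of eigenvectors spans: a nonzero vector orthogonal
  to it would produce one more eigenvector.\<close>

lemma hermitian_eigenbasis:
  fixes A :: "complex^'n^'n"
  assumes h: "hermitian A"
  obtains B where "orthonormal_basis B" "real_eigenvectors A B"
proof -
  define F where "F B \<longleftrightarrow> orthonormal B \<and> real_eigenvectors A B" for B :: "(complex^'n) set"
  have "F {}"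
    by (simp add: F_def orthonormal_def real_eigenvectors_def)
  moreover have "\<forall>B. F B \<longrightarrow> card B < Suc DIM(complex^'n)"
    using orthonormal_card_le by (auto simp: F_def less_Suc_eq_le)
  ultimately obtain B where "F B" and Bmax: "\<And>B'. F B' \<Longrightarrow> card B' \<le> card B"
    using Lattices_Big.ex_has_greatest_nat[of F "{}" card] by blast
  then have B: "orthonormal B" "real_eigenvectors A B"
    by (simp_all add: F_def)
  have "v = (\<Sum>b\<in>B. cinner b v *s b)" for v
  proof (rule ccontr)
    define w where "w = v - (\<Sum>b\<in>B. cinner b v *s b)"
    assume "v \<noteq> (\<Sum>b\<in>B. cinner b v *s b)"
    then have "w \<noteq> 0"
      by (simp add: w_def)
    moreover have "w \<in> orth_compl B"
      using orthonormal_coeff[OF B(1)] by (simp add: w_def orth_compl_def cinner_diff_right)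
    ultimately obtain u where u: "norm u = 1" "u \<in> orth_compl B"
      and Au: "A *v u = of_real (Re (cinner u (A *v u))) *s u"
      using hermitian_eigenvector_in_orth_compl[OF h B(2)] by blast
    have uu: "cinner u u = 1"
      using u(1) by (simp add: cinner_self)
    have "cinner u b = 0" "cinner b u = 0" if "b \<in> B" for b
      using u(2) that cnj_cinner[of b u] by (auto simp: orth_compl_def)
    then have "F (insert u B)"
      using B Au uu unfolding F_def orthonormal_def real_eigenvectors_def by auto
    moreover have "u \<notin> B"
      using u(2) uu by (auto simp: orth_compl_def)
    ultimately show False
      using Bmax[of "insert u B"] B(1) by (simp add: orthonormal_def)
  qed
  then have "orthonormal_basis B"
    unfolding orthonormal_basis_def using B(1) by blast
  with B(2) that show ?thesis
    by blast
qed

lemma hermitian_diagonalizable: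
  fixes H :: "complex^'n^'n"
  assumes "hermitian H"
  obtains B l where "orthonormal_basis B" "H = diag_in B (\<lambda>b. of_real (l b))"
proof -
  obtain B where B: "orthonormal_basis B" and eig: "real_eigenvectors H B"
    using hermitian_eigenbasis[OF assms] by blast
  define l where "l b = Re (cinner b (H *v b))" for b
  have "H *v x = diag_in B (\<lambda>b. of_real (l b)) *v x" for x
  proof -
    have "H *v x = (\<Sum>b\<in>B. cinner b x *s (H *v b))"
      by (subst orthonormal_basis_expansion[OF B, of x]) (simp add: vec.sum vector_scalar_commute)
    also have "\<dots> = (\<Sum>b\<in>B. cinner b x *s (of_real (l b) *s b))"
      using eig by (intro sum.cong) (simp_all add: real_eigenvectors_def l_def)
    also have "\<dots> = diag_in B (\<lambda>b. of_real (l b)) *v x"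
      by (simp add: diag_in_apply vector_smult_assoc mult_ac)
    finally show ?thesis .
  qed
  then have "H = diag_in B (\<lambda>b. of_real (l b))"
    by (simp add: matrix_eq)
  with B that show ?thesis
    by blast
qed

section \<open>The trace norm\<close>

definition trace_norm :: "complex^'n^'n \<Rightarrow> real" where
  "trace_norm M = Re (trace (mabs M))"

text \<open>Numerical radius rather than operator norm suffices here: the trace pairing only
  sees the diagonal entries \<open>\<langle>b, C b\<rangle>\<close> in an orthonormal basis.\<close>

definition numrad_le_1 :: "complex^'n^'n \<Rightarrow> bool" where
  "numrad_le_1 C \<longleftrightarrow> (\<forall>v. cmod (cinner v (C *v v)) \<le> (norm v)^2)"

lemma tdist_eq_trace_norm: "tdist A B = trace_norm (A - B) / 2"
  by (simp add: tdist_def trace_norm_def)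

lemma psd_diag_in: "(\<And>b. b \<in> B \<Longrightarrow> r b \<ge> 0) \<Longrightarrow> psd (diag_in B (\<lambda>b. of_real (r b)))"
  by (simp add: psd_iff cadj_diag_in cinner_diag_in of_real_sum[symmetric] Re_sum sum_nonneg
      flip: of_real_mult)

lemma mabs_diag_in:
  assumes B: "orthonormal_basis B"
  shows "mabs (diag_in B (\<lambda>b. of_real (l b))) = diag_in B (\<lambda>b. of_real \<bar>l b\<bar>)"
  by (rule mabs_unique)
    (simp_all add: psd_diag_in cadj_diag_in diag_in_mult[OF B] abs_mult_self_eq flip: of_real_mult)

lemma numrad_le_1_id: "numrad_le_1 (mat 1)"
  by (simp add: numrad_le_1_def cinner_self norm_power)

text \<open>In an eigenbasis of \<open>H\<close>, \<open>tr (C H) = \<Sum> \<lambda>\<^sub>b \<langle>b, C b\<rangle>\<close> with \<open>|\<langle>b, C b\<rangle>| \<le> 1\<close>.\<close>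

lemma trace_mult_le_trace_norm:
  assumes h: "hermitian H" and C: "numrad_le_1 C"
  shows "cmod (trace (C ** H)) \<le> trace_norm H"
proof -
  obtain B l where B: "orthonormal_basis B" and H: "H = diag_in B (\<lambda>b. of_real (l b))"
    using hermitian_diagonalizable[OF h] by blast
  have "trace (C ** H) = (\<Sum>b\<in>B. of_real (l b) * cinner b (C *v b))"
    unfolding trace_orthonormal_basis[OF B] H matrix_vector_mul_assoc[symmetric]
    by (intro sum.cong) (auto simp: diag_in_apply_basis[OF B] vector_scalar_commute cinner_scale_right)
  also have "cmod \<dots> \<le> (\<Sum>b\<in>B. \<bar>l b\<bar>)"
  proof (rule order.trans[OF norm_sum sum_mono])
    fix b assume "b \<in> B"
    then have "cmod (cinner b (C *v b)) \<le> 1"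
      using C orthonormal_basis_norm[OF B] unfolding numrad_le_1_def by (metis power_one)
    then show "cmod (of_real (l b) * cinner b (C *v b)) \<le> \<bar>l b\<bar>"
      by (simp add: norm_mult mult_left_le)
  qed
  also have "\<dots> = trace_norm H"
    by (simp add: trace_norm_def H mabs_diag_in[OF B] trace_diag_in[OF B] Re_sum)
  finally show ?thesis .
qed

lemma trace_norm_attained:
  assumes h: "hermitian H"
  obtains C where "numrad_le_1 C" "trace (C ** H) = trace (mabs H)"
proof -
  obtain B l where B: "orthonormal_basis B" and H: "H = diag_in B (\<lambda>b. of_real (l b))"
    using hermitian_diagonalizable[OF h] by blast
  define C where "C = diag_in B (\<lambda>b. of_real (sgn (l b)))"
  have "sgn x * x = \<bar>x\<bar>" for x :: real
    by (simp add: sgn_real_def)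
  then have "C ** H = mabs H"
    unfolding C_def H mabs_diag_in[OF B] diag_in_mult[OF B] by (simp flip: of_real_mult)
  moreover have "numrad_le_1 C"
    unfolding numrad_le_1_def
  proof
    fix v
    have "cmod (cinner v (C *v v)) = \<bar>\<Sum>b\<in>B. sgn (l b) * (cmod (cinner b v))^2\<bar>"
      unfolding C_def cinner_diag_in by (simp flip: of_real_mult of_real_power of_real_sum)
    also have "\<dots> \<le> (\<Sum>b\<in>B. (cmod (cinner b v))^2)"
      by (rule order.trans[OF sum_abs sum_mono]) (simp add: abs_mult abs_sgn_eq)
    also have "\<dots> = (norm v)^2"
      using parseval[OF B] by simp
    finally show "cmod (cinner v (C *v v)) \<le> (norm v)^2" .
  qed
  ultimately show ?thesis
    using that by simp
qed

lemma trace_norm_psd: "psd M \<Longrightarrow> trace_norm M = Re (trace M)"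
  by (simp add: trace_norm_def mabs_psd)

lemma abs_Re_trace_le_trace_norm:
  assumes "hermitian H"
  shows "\<bar>Re (trace H)\<bar> \<le> trace_norm H"
  using trace_mult_le_trace_norm[OF assms numrad_le_1_id] abs_Re_le_cmod[of "trace H"] by simp

section \<open>Compression by an orthogonal projection\<close>

lemma norm_orth_proj_le:
  assumes "hermitian Q" "Q ** Q = Q"
  shows "norm (Q *v v) \<le> norm v"
proof -
  have "cinner (Q *v v) (Q *v v) = cinner v (Q *v (Q *v v))"
    using cinner_hermitian[OF assms(1), of v "Q *v v"] by simp
  also have "\<dots> = cinner v (Q *v v)"
    by (simp add: matrix_vector_mul_assoc assms(2))
  also have "\<dots> = cinner (Q *v v) v"
    by (rule cinner_hermitian[OF assms(1)])
  finally have "orthogonal (Q *v v) (v - Q *v v)"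
    by (simp add: orthogonal_def inner_eq_Re_cinner cinner_diff_right)
  then have "(norm v)^2 = (norm (Q *v v))^2 + (norm (v - Q *v v))^2"
    using norm_add_Pythagorean[of "Q *v v" "v - Q *v v"] by simp
  then have "(norm (Q *v v))^2 \<le> (norm v)^2"
    by simp
  then show ?thesis
    by (rule power2_le_imp_le) simp
qed

lemma numrad_le_1_compression:
  assumes "hermitian Q" "Q ** Q = Q" "numrad_le_1 C"
  shows "numrad_le_1 (Q ** C ** Q)"
  unfolding numrad_le_1_def
proof
  fix v
  have "cmod (cinner v ((Q ** C ** Q) *v v)) \<le> (norm (Q *v v))^2"
    using assms(3) by (simp add: numrad_le_1_def cinner_sandwich[OF assms(1)])
  also have "\<dots> \<le> (norm v)^2"
    using norm_orth_proj_le[OF assms(1,2)] by (simp add: power_mono)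
  finally show "cmod (cinner v ((Q ** C ** Q) *v v)) \<le> (norm v)^2" .
qed

lemma trace_norm_compression_le:
  assumes "hermitian Q" "Q ** Q = Q" "hermitian H"
  shows "trace_norm (Q ** H ** Q) \<le> trace_norm H"
proof -
  have "hermitian (Q ** H ** Q)"
    using assms by (simp add: cadj_mult matrix_mul_assoc)
  then obtain C where C: "numrad_le_1 C"
    and tC: "trace (C ** (Q ** H ** Q)) = trace (mabs (Q ** H ** Q))"
    by (rule trace_norm_attained)
  have "trace (C ** (Q ** H ** Q)) = trace (Q ** (C ** Q ** H))"
    by (simp add: matrix_mul_assoc trace_mul_sym[of _ Q])
  then have "trace_norm (Q ** H ** Q) = Re (trace ((Q ** C ** Q) ** H))"
    using tC by (simp add: trace_norm_def matrix_mul_assoc)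
  also have "\<dots> \<le> trace_norm H"
    using trace_mult_le_trace_norm[OF assms(3) numrad_le_1_compression[OF assms(1,2) C]]
      complex_Re_le_cmod by (rule order_trans[rotated])
  finally show ?thesis .
qed

text \<open>Pairing \<open>X = A/p - B/q\<close> with a \<open>C\<close> attaining its trace norm gives
  \<open>tr (C X) = tr (C (A - B))/p + (1/p - 1/q) tr (C B)\<close>, and \<open>|tr (C B)| \<le> tr B = q\<close>.\<close>

lemma trace_norm_normalized_diff_le:
  fixes A B :: "complex^'n^'n"
  assumes A: "hermitian A" and B: "psd B"
    and p: "Re (trace A) = p" "p > 0" and q: "Re (trace B) = q" "q > 0"
  shows "trace_norm ((1 / p) *\<^sub>R A - (1 / q) *\<^sub>R B) \<le> (trace_norm (A - B) + \<bar>p - q\<bar>) / p"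
proof -
  define X where "X = (1 / p) *\<^sub>R A - (1 / q) *\<^sub>R B"
  have hB: "hermitian B"
    using B by (rule psd_hermitian)
  have "hermitian X"
    using A hB by (simp add: X_def cadj_diff cadj_scaleR)
  then obtain C where C: "numrad_le_1 C" and tC: "trace (C ** X) = trace (mabs X)"
    by (rule trace_norm_attained)
  have "trace (C ** X) = (1 / p) *\<^sub>R trace (C ** (A - B)) + (1 / p - 1 / q) *\<^sub>R trace (C ** B)"
    by (simp add: X_def matrix_diff_ldistrib matrix_mult_scaleR_right trace_sub trace_scaleR
        algebra_simps)
  then have "trace_norm X = Re (trace (C ** (A - B))) / p + (1 / p - 1 / q) * Re (trace (C ** B))"
    using tC by (simp add: trace_norm_def)
  also have "\<dots> \<le> trace_norm (A - B) / p + \<bar>1 / p - 1 / q\<bar> * q"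
  proof (rule add_mono)
    have "Re (trace (C ** (A - B))) \<le> trace_norm (A - B)"
      using trace_mult_le_trace_norm[OF _ C, of "A - B"] A hB complex_Re_le_cmod
      by (metis cadj_diff order_trans)
    then show "Re (trace (C ** (A - B))) / p \<le> trace_norm (A - B) / p"
      using p(2) by (simp add: divide_right_mono)
    have "\<bar>Re (trace (C ** B))\<bar> \<le> q"
      using trace_mult_le_trace_norm[OF hB C] trace_norm_psd[OF B] q(1) abs_Re_le_cmod
      by (metis order_trans)
    then have "\<bar>(1 / p - 1 / q) * Re (trace (C ** B))\<bar> \<le> \<bar>1 / p - 1 / q\<bar> * q"
      by (simp add: abs_mult mult_left_mono)
    then show "(1 / p - 1 / q) * Re (trace (C ** B)) \<le> \<bar>1 / p - 1 / q\<bar> * q"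
      by linarith
  qed
  also have "\<bar>1 / p - 1 / q\<bar> * q = \<bar>p - q\<bar> / p"
    using p(2) q(2) by (simp add: abs_mult_pos[symmetric] field_simps abs_minus_commute)
  finally show ?thesis
    by (simp add: X_def add_divide_distrib)
qed

section \<open>Classical-quantum states\<close>

definition vec_block :: "complex^('x::finite \<times> 'e::finite) \<Rightarrow> 'x \<Rightarrow> complex^'e" where
  "vec_block v x = (\<chi> e. v $ (x, e))"

lemma sum_UNIV_prod:
  "(\<Sum>j\<in>(UNIV :: ('a::finite \<times> 'b::finite) set). f j) = (\<Sum>a\<in>UNIV. \<Sum>b\<in>UNIV. f (a, b))"
  by (simp add: sum.cartesian_product)

lemma cq_state_hermitian:
  assumes "\<And>x. hermitian (\<omega> x)"
  shows "hermitian (cq_state P \<omega>)"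
proof -
  have "cnj (\<omega> x $ a $ b) = \<omega> x $ b $ a" for x a b
    using arg_cong[OF assms[of x], of "\<lambda>M. M $ b $ a"] by (simp add: cadj_def)
  then show ?thesis
    by (auto simp: cadj_def cq_state_def vec_eq_iff)
qed

lemma cq_state_apply:
  "(cq_state P \<omega> *v v) $ (x, e) = of_real (P x) * (\<omega> x *v vec_block v x) $ e"
proof -
  have "(cq_state P \<omega> *v v) $ (x, e)
      = (\<Sum>a\<in>UNIV. if x = a then (\<Sum>b\<in>UNIV. of_real (P x) * \<omega> x $ e $ b * v $ (x, b)) else 0)"
    unfolding matrix_vector_mult_def cq_state_def vec_lambda_beta sum_UNIV_prod
    by (intro sum.cong) auto
  then show ?thesis
    by (simp add: matrix_vector_mult_def vec_block_def sum_distrib_left mult_ac)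
qed

lemma cinner_cq_state:
  "cinner v (cq_state P \<omega> *v v) = (\<Sum>x\<in>UNIV. of_real (P x) * cinner (vec_block v x) (\<omega> x *v vec_block v x))"
  unfolding cinner_def sum_UNIV_prod cq_state_apply
  by (simp add: vec_block_def sum_distrib_left mult_ac)

lemma cq_state_psd:
  assumes "\<And>x. P x \<ge> 0" "\<And>x. psd (\<omega> x)"
  shows "psd (cq_state P \<omega>)"
  using assms cq_state_hermitian[OF psd_hermitian[OF assms(2)]]
  by (simp add: psd_iff cinner_cq_state Re_sum Im_sum sum_nonneg)

lemma proj_cl_apply: "proj_cl S *v v = (\<chi> i. if fst i \<in> S then v $ i else 0)"
proof -
  have "(proj_cl S *v v) $ i = (\<Sum>j\<in>UNIV. if j = i then (if fst i \<in> S then v $ i else 0) else 0)" for i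
    unfolding matrix_vector_mult_def proj_cl_def vec_lambda_beta by (intro sum.cong) auto
  then show ?thesis
    by (simp add: vec_eq_iff)
qed

lemma proj_cl_hermitian: "hermitian (proj_cl S)"
  by (auto simp: cadj_def proj_cl_def vec_eq_iff)

lemma proj_cl_idem: "proj_cl S ** proj_cl S = proj_cl S"
  by (simp add: matrix_eq matrix_vector_mul_assoc[symmetric] proj_cl_apply vec_eq_iff)

theorem lemma3:
  fixes P Ps :: "'x::finite \<Rightarrow> real"
    and \<omega> \<omega>s :: "'x \<Rightarrow> complex^'e::finite^'e"
    and S :: "'x set" and \<epsilon> :: real
  assumes "\<forall>x. P x \<ge> 0" and "(\<Sum>x\<in>UNIV. P x) = 1"
    and "\<forall>x. Ps x \<ge> 0" and "(\<Sum>x\<in>UNIV. Ps x) = 1"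
    and "\<forall>x. density (\<omega> x)" and "\<forall>x. density (\<omega>s x)"
    and "\<epsilon> > 0"
  defines "\<rho> \<equiv> cq_state P \<omega>" and "\<rho>s \<equiv> cq_state Ps \<omega>s"
    and "Proj \<equiv> (proj_cl S :: complex^('x \<times> 'e)^('x \<times> 'e))"
  defines "p \<equiv> Re (trace (Proj ** \<rho> ** Proj))" and "ps \<equiv> Re (trace (Proj ** \<rho>s ** Proj))"
  defines "\<tau> \<equiv> (1 / p) *\<^sub>R (Proj ** \<rho> ** Proj)" and "\<tau>s \<equiv> (1 / ps) *\<^sub>R (Proj ** \<rho>s ** Proj)"
  assumes "p > 0" and "ps > 0"
    and "tdist \<rho> \<rho>s \<le> p * \<epsilon>^2 / 4"
  shows "\<bar>p - ps\<bar> \<le> p * \<epsilon>^2 / 2 \<and> tdist \<tau> \<tau>s \<le> \<epsilon>^2 / 2"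
proof -
  have Q: "hermitian Proj" "Proj ** Proj = Proj"
    by (simp_all add: Proj_def proj_cl_hermitian proj_cl_idem)
  have "psd \<rho>" "psd \<rho>s"
    using assms(1,3,5,6) unfolding \<rho>_def \<rho>s_def density_def by (auto intro: cq_state_psd)
  then have compressed: "psd (Proj ** \<rho> ** Proj)" "psd (Proj ** \<rho>s ** Proj)"
    and h_diff: "hermitian (Proj ** (\<rho> - \<rho>s) ** Proj)" "hermitian (\<rho> - \<rho>s)"
    using Q(1) by (simp_all add: psd_sandwich psd_hermitian cadj_diff cadj_mult matrix_mul_assoc)
  have diff: "Proj ** \<rho> ** Proj - Proj ** \<rho>s ** Proj = Proj ** (\<rho> - \<rho>s) ** Proj"
    by (simp add: matrix_diff_ldistrib matrix_diff_rdistrib)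
  have small: "trace_norm (Proj ** (\<rho> - \<rho>s) ** Proj) \<le> p * \<epsilon>^2 / 2"
    using trace_norm_compression_le[OF Q h_diff(2)] \<open>tdist \<rho> \<rho>s \<le> p * \<epsilon>^2 / 4\<close>
    unfolding tdist_eq_trace_norm by simp
  have "p - ps = Re (trace (Proj ** (\<rho> - \<rho>s) ** Proj))"
    unfolding p_def ps_def diff[symmetric] by (simp add: trace_sub)
  then have close: "\<bar>p - ps\<bar> \<le> p * \<epsilon>^2 / 2"
    using abs_Re_trace_le_trace_norm[OF h_diff(1)] small by linarith
  have "trace_norm (\<tau> - \<tau>s) \<le> (trace_norm (Proj ** (\<rho> - \<rho>s) ** Proj) + \<bar>p - ps\<bar>) / p"
    using trace_norm_normalized_diff_le[OF psd_hermitian[OF compressed(1)] compressed(2)]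
      p_def ps_def \<open>p > 0\<close> \<open>ps > 0\<close>
    unfolding \<tau>_def \<tau>s_def diff by simp
  also have "\<dots> \<le> (p * \<epsilon>^2 / 2 + p * \<epsilon>^2 / 2) / p"
    using small close \<open>p > 0\<close> by (intro divide_right_mono add_mono) simp_all
  also have "\<dots> = \<epsilon>^2"
    using \<open>p > 0\<close> by simp
  finally show ?thesis
    using close by (simp add: tdist_eq_trace_norm)
qed

end
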